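(* Let $\nu\propto e^{-f}$ and suppose $X_t\sim\rho_t$ evolves according to the Langevin dynamics $dX_t=-\nabla f(X_t)\,dt+\sqrt2\,dW_t$; let $\rho_{0,t}$ be the joint law of $(X_0,X_t)$. Then (under sufficient regularity to differentiate under the integral) for all $t>0$, $$\frac{d}{dt}\mathsf{MI}_\Phi(\rho_{0,t})=-\mathsf{FI}^{\mathsf M}_\Phi(\rho_{0,t}),$$ where for a joint distribution $\rho^{XY}$ the $\Phi$-mutual Fisher information is $\mathsf{FI}^{\mathsf M}_\Phi(\rho^{XY}):=\mathbb E_{x\sim\rho^X}\big[\mathsf{FI}_\Phi(\rho^{Y\mid X=x}\|\rho^Y)\big]$.
   Context: Throughout, $\Phi:[0,\infty)\to\mathbb R$ is a twice-differentiable strictly convex function with $\Phi(1)=0$. For probability distributions $\mu,\nu$ on $\mathbb R^d$ with $\mu\ll\nu$, the $\Phi$-divergence is $\mathsf D_\Phi(\mu\|\nu)=\int\Phi\big(\frac{d\mu}{d\nu}\big)\,d\nu$, and $\mathsf D_\Phi(\mu\|\nu)=+\infty$ if $\mu\not\ll\nu$. For a random pair $(X,Y)$ with joint law $\rho^{XY}$ and marginals $\rho^X,\rho^Y$, the $\Phi$-mutual information is $\mathsf{MI}_\Phi(\rho^{XY})=\mathsf D_\Phi(\rho^{XY}\|\rho^X\otimes\rho^Y)=\mathbb E_{x\sim\rho^X}[\mathsf D_\Phi(\rho^{Y\mid X=x}\|\rho^Y)]$. For distributions with densities (identified with the distributions), the $\Phi$-Fisher information is $\mathsf{FI}_\Phi(\mu\|\nu)=\mathbb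 E_\nu\big[\|\nabla\frac{\mu}{\nu}\|^2\,\Phi''(\frac{\mu}{\nu})\big]$. $W_t$ is standard Brownian motion on $\mathbb R^d$. *)

theory Defs
  imports "HOL-Analysis.Analysis" "HOL-Probability.Probability"
begin

definition strictly_convex_on :: "real set \<Rightarrow> (real \<Rightarrow> real) \<Rightarrow> bool" where
  "strictly_convex_on S g \<longleftrightarrow>
     (\<forall>x\<in>S. \<forall>y\<in>S. x \<noteq> y \<longrightarrow>
        (\<forall>u::real. 0 < u \<and> u < 1 \<longrightarrow> g ((1 - u) * x + u * y) < (1 - u) * g x + u * g y))"

definition grad :: "('a::euclidean_space \<Rightarrow> real) \<Rightarrow> 'a \<Rightarrow> 'a" where
  "grad g y = (\<Sum>i\<in>Basis. frechet_derivative g (at y) i *\<^sub>R i)"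

definition divg :: "('a::euclidean_space \<Rightarrow> 'a) \<Rightarrow> 'a \<Rightarrow> real" where
  "divg V y = (\<Sum>i\<in>Basis. frechet_derivative V (at y) i \<bullet> i)"

definition phi_div :: "(real \<Rightarrow> real) \<Rightarrow> ('a::euclidean_space \<Rightarrow> real) \<Rightarrow> ('a \<Rightarrow> real) \<Rightarrow> real" where
  "phi_div Phi mu nu = (\<integral>y. Phi (mu y / nu y) * nu y \<partial>lborel)"

definition phi_fisher :: "(real \<Rightarrow> real) \<Rightarrow> ('a::euclidean_space \<Rightarrow> real) \<Rightarrow> ('a \<Rightarrow> real) \<Rightarrow> real" where
  "phi_fisher Phi mu nu =
     (\<integral>y. (norm (grad (\<lambda>z. mu z / nu z) y))\<^sup>2 * deriv (deriv Phi) (mu y / nu y) * nu y \<partial>lborel)"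

text \<open>A joint law of (X,Y) given by the law M of X and conditional Lebesgue densities
  kappa x of Y given X = x.  The density of the Y-marginal:\<close>
definition marginal :: "'a measure \<Rightarrow> ('a \<Rightarrow> 'b \<Rightarrow> real) \<Rightarrow> 'b \<Rightarrow> real" where
  "marginal M kappa y = (\<integral>x. kappa x y \<partial>M)"

definition phi_MI :: "(real \<Rightarrow> real) \<Rightarrow> 'a measure \<Rightarrow> ('a \<Rightarrow> 'b::euclidean_space \<Rightarrow> real) \<Rightarrow> real" where
  "phi_MI Phi M kappa = (\<integral>x. phi_div Phi (kappa x) (marginal M kappa) \<partial>M)"

definition phi_MFI :: "(real \<Rightarrow> real) \<Rightarrow> 'a measure \<Rightarrow> ('a \<Rightarrow> 'b::euclidean_space \<Rightarrow> real) \<Rightarrow> real" where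
  "phi_MFI Phi M kappa = (\<integral>x. phi_fisher Phi (kappa x) (marginal M kappa) \<partial>M)"

text \<open>Probability flux of the Langevin dynamics dX = -grad f dt + sqrt 2 dW for a density u:
  J = u grad f + grad u  (so the Fokker--Planck equation reads  d/dt u = div J).\<close>
definition langevin_flux :: "('a::euclidean_space \<Rightarrow> real) \<Rightarrow> ('a \<Rightarrow> real) \<Rightarrow> 'a \<Rightarrow> 'a" where
  "langevin_flux f u z = u z *\<^sub>R grad f z + grad u z"

definition langevin_FP :: "('a::euclidean_space \<Rightarrow> real) \<Rightarrow> (real \<Rightarrow> 'a \<Rightarrow> real) \<Rightarrow> bool" where
  "langevin_FP f u \<longleftrightarrow>
     (\<forall>s>0. \<forall>y. u s differentiable (at y)
              \<and> langevin_flux f (u s) differentiable (at y)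
              \<and> ((\<lambda>s'. u s' y) has_real_derivative divg (langevin_flux f (u s)) y) (at s))"

end

theory Submission
  imports Defs
begin

text \<open>Let \<open>q\<^sub>s\<close> be the density of \<open>X\<^sub>s\<close> and \<open>r = p\<^sub>s(x,\<cdot>) / q\<^sub>s\<close>. The integrand of the
  \<open>\<Phi>\<close>-divergence is the perspective \<open>\<Phi>(r) q\<close>, whose time derivative is
  \<open>\<Phi>'(r) \<partial>\<^sub>s p + (\<Phi>(r) - r \<Phi>'(r)) \<partial>\<^sub>s q\<close>. Both \<open>p\<^sub>s(x,\<cdot>)\<close> and \<open>q\<^sub>s\<close> solve the
  Fokker--Planck equation \<open>\<partial>\<^sub>s u = div J\<^sub>u\<close> with flux \<open>J\<^sub>u = u \<nabla>f + \<nabla>u\<close>, and the drift terms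
  cancel in \<open>J\<^sub>p - r J\<^sub>q = q \<nabla>r\<close>. Hence the time derivative equals
  \<open>div (\<Phi>'(r) J\<^sub>p + (\<Phi>(r) - r \<Phi>'(r)) J\<^sub>q) - \<Phi>''(r) |\<nabla>r|\<^sup>2 q\<close>. The divergence of an
  integrable field with integrable partial derivatives integrates to zero (Fubini and the
  fundamental theorem of calculus along coordinate lines), so integrating over \<open>y\<close> leaves minus
  the \<open>\<Phi>\<close>-Fisher information, and averaging over \<open>x \<sim> \<rho>\<^sub>0\<close> gives the claim.
  Only the Fokker--Planck equations, positivity, differentiability of \<open>\<Phi>\<close> and \<open>\<Phi>'\<close> on
  \<open>(0, \<infinity>)\<close> and the regularity hypotheses enter.\<close>

lemma has_derivative_grad:
  fixes g :: "'a::euclidean_space \<Rightarrow> real"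
  assumes "g differentiable (at y)"
  shows "(g has_derivative (\<lambda>v. grad g y \<bullet> v)) (at y)"
proof -
  define L where "L = frechet_derivative g (at y)"
  have L: "(g has_derivative L) (at y)"
    unfolding L_def using assms frechet_derivative_works by blast
  have "L v = grad g y \<bullet> v" for v
  proof -
    have "L v = L (\<Sum>i\<in>Basis. (v \<bullet> i) *\<^sub>R i)" by (simp add: euclidean_representation)
    also have "\<dots> = (\<Sum>i\<in>Basis. (v \<bullet> i) * L i)"
      using has_derivative_linear[OF L] by (simp add: linear_sum linear_scale)
    also have "\<dots> = grad g y \<bullet> v"
      unfolding grad_def L_def by (simp add: inner_sum_left inner_sum_right mult.commute inner_commute)
    finally show ?thesis .
  qed
  then have "L = (\<lambda>v. grad g y \<bullet> v)" by blast
  then show ?thesis using L by simp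
qed

lemma grad_eqI:
  fixes g :: "'a::euclidean_space \<Rightarrow> real"
  assumes "(g has_derivative (\<lambda>v. w \<bullet> v)) (at y)"
  shows "grad g y = w"
  unfolding grad_def frechet_derivative_at[OF assms, symmetric]
  using euclidean_representation[of w] by (simp add: inner_commute)

lemma divg_eqI:
  fixes V :: "'a::euclidean_space \<Rightarrow> 'a"
  assumes "(V has_derivative V') (at y)"
  shows "divg V y = (\<Sum>i\<in>Basis. V' i \<bullet> i)"
  unfolding divg_def frechet_derivative_at[OF assms, symmetric] ..

lemma grad_compose:
  fixes r :: "'a::euclidean_space \<Rightarrow> real"
  assumes "(h has_real_derivative D) (at (r y))" and "r differentiable (at y)"
  shows "(\<lambda>z. h (r z)) differentiable (at y)" "grad (\<lambda>z. h (r z)) y = D *\<^sub>R grad r y"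
proof -
  have "((\<lambda>z. h (r z)) has_derivative (\<lambda>v. (D *\<^sub>R grad r y) \<bullet> v)) (at y)"
    using DERIV_compose_FDERIV[OF assms(1) has_derivative_grad[OF assms(2)]] by (simp add: mult.commute)
  then show "(\<lambda>z. h (r z)) differentiable (at y)" "grad (\<lambda>z. h (r z)) y = D *\<^sub>R grad r y"
    by (auto intro: differentiableI grad_eqI)
qed

lemma grad_divide:
  fixes P Q :: "'a::euclidean_space \<Rightarrow> real"
  assumes "P differentiable (at y)" "Q differentiable (at y)" "Q y \<noteq> 0"
  shows "grad (\<lambda>z. P z / Q z) y = (1 / Q y) *\<^sub>R (grad P y - (P y / Q y) *\<^sub>R grad Q y)"
proof -
  have "((\<lambda>z. P z / Q z) has_derivative
          (\<lambda>h. ((grad P y \<bullet> h) * Q y - P y * (grad Q y \<bullet> h)) / (Q y * Q y))) (at y)"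
    using has_derivative_divide'[OF has_derivative_grad[OF assms(1)] has_derivative_grad[OF assms(2)] assms(3)] .
  also have "(\<lambda>h. ((grad P y \<bullet> h) * Q y - P y * (grad Q y \<bullet> h)) / (Q y * Q y))
      = (\<lambda>h. ((1 / Q y) *\<^sub>R (grad P y - (P y / Q y) *\<^sub>R grad Q y)) \<bullet> h)"
    using assms(3) by (simp add: fun_eq_iff inner_diff_left field_simps)
  finally show ?thesis
    by (rule grad_eqI)
qed

lemma divg_add:
  fixes V W :: "'a::euclidean_space \<Rightarrow> 'a"
  assumes "V differentiable (at y)" "W differentiable (at y)"
  shows "divg (\<lambda>z. V z + W z) y = divg V y + divg W y"
proof -
  obtain V' W' where V: "(V has_derivative V') (at y)" and W: "(W has_derivative W') (at y)"
    using assms unfolding differentiable_def by blast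
  have "divg (\<lambda>z. V z + W z) y = (\<Sum>i\<in>Basis. (V' i + W' i) \<bullet> i)"
    by (rule divg_eqI[OF has_derivative_add[OF V W]])
  also have "\<dots> = (\<Sum>i\<in>Basis. V' i \<bullet> i) + (\<Sum>i\<in>Basis. W' i \<bullet> i)"
    by (simp add: inner_add_left sum.distrib)
  finally show ?thesis
    by (simp only: divg_eqI[OF V] divg_eqI[OF W])
qed

lemma divg_scaleR:
  fixes a :: "'a::euclidean_space \<Rightarrow> real" and V :: "'a \<Rightarrow> 'a"
  assumes "a differentiable (at y)" "V differentiable (at y)"
  shows "divg (\<lambda>z. a z *\<^sub>R V z) y = a y * divg V y + grad a y \<bullet> V y"
proof -
  obtain V' where V: "(V has_derivative V') (at y)"
    using assms(2) unfolding differentiable_def by blast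
  have "divg (\<lambda>z. a z *\<^sub>R V z) y = (\<Sum>i\<in>Basis. (a y *\<^sub>R V' i + (grad a y \<bullet> i) *\<^sub>R V y) \<bullet> i)"
    by (rule divg_eqI[OF has_derivative_scaleR[OF has_derivative_grad[OF assms(1)] V]])
  also have "\<dots> = a y * (\<Sum>i\<in>Basis. V' i \<bullet> i) + (\<Sum>i\<in>Basis. (grad a y \<bullet> i) * (V y \<bullet> i))"
    by (simp add: inner_add_left sum.distrib sum_distrib_left)
  finally show ?thesis
    using divg_eqI[OF V] euclidean_inner[of "grad a y" "V y"] by simp
qed

lemma lborel_integral_translate:
  fixes h :: "'a::euclidean_space \<Rightarrow> 'b::{banach, second_countable_topology}"
  assumes "h \<in> borel_measurable borel"
  shows "(\<integral>y. h (y + c) \<partial>lborel) = (\<integral>y. h y \<partial>lborel)"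
  using integral_distr[of "(+) c" lborel borel h, symmetric] assms
  by (simp add: lborel_distr_plus add.commute)

lemma lborel_integrable_translate:
  fixes h :: "'a::euclidean_space \<Rightarrow> 'b::{banach, second_countable_topology}"
  assumes "integrable lborel h"
  shows "integrable lborel (\<lambda>y. h (y + c))"
proof -
  have "integrable (distr lborel borel ((+) c)) h"
    using assms by (simp add: lborel_distr_plus)
  then show ?thesis
    using borel_measurable_integrable[OF assms]
    by (subst (asm) integrable_distr_eq) (simp_all add: add.commute)
qed

lemma set_integral_segment_eq_diff:
  fixes g g' :: "'a::real_vector \<Rightarrow> real"
  assumes der: "\<And>s. ((\<lambda>s. g (y + s *\<^sub>R e)) has_real_derivative g' (y + s *\<^sub>R e)) (at s)"
    and int: "set_integrable lborel {0..1} (\<lambda>s. g' (y + s *\<^sub>R e))"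
  shows "(LINT s:{0..1}|lborel. g' (y + s *\<^sub>R e)) = g (y + e) - g y"
proof -
  have "(LINT s:{0..1}|lborel. g' (y + s *\<^sub>R e)) = integral {0..1} (\<lambda>s. g' (y + s *\<^sub>R e))"
    by (rule set_borel_integral_eq_integral(2)[OF int])
  also have "\<dots> = g (y + 1 *\<^sub>R e) - g (y + 0 *\<^sub>R e)"
    using der
    by (intro integral_unique fundamental_theorem_of_calculus)
      (auto simp: has_real_derivative_iff_has_vector_derivative has_vector_derivative_at_within)
  finally show ?thesis by simp
qed

lemma integrable_pair_translate_strip:
  fixes g :: "'a::euclidean_space \<Rightarrow> real"
  assumes "integrable lborel g"
  shows "integrable (lborel \<Otimes>\<^sub>M lborel) (\<lambda>(s::real, y). indicator {0..1} s * g (y + s *\<^sub>R e))"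
proof (rule lborel_pair.Fubini_integrable)
  have [measurable]: "g \<in> borel_measurable borel"
    using borel_measurable_integrable[OF assms] by simp
  show "(\<lambda>(s::real, y). indicator {0..1} s * g (y + s *\<^sub>R e)) \<in> borel_measurable (lborel \<Otimes>\<^sub>M lborel)"
    by measurable
  have "(\<integral>y. norm (indicator {0..1} s * g (y + s *\<^sub>R e)) \<partial>lborel)
      = indicator {0..1} s * (\<integral>y. norm (g y) \<partial>lborel)" for s :: real
    using lborel_integral_translate[of "\<lambda>y. norm (g y)" "s *\<^sub>R e"] by (simp add: abs_mult)
  then show "integrable lborel (\<lambda>s. \<integral>y. norm (case (s, y) of (s, y) \<Rightarrow> indicator {0..1} s * g (y + s *\<^sub>R e)) \<partial>lborel)"
    by (simp add: integrable_indicator_iff)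
  show "AE s in lborel. integrable lborel (\<lambda>y. case (s, y) of (s, y) \<Rightarrow> indicator {0..1} s * g (y + s *\<^sub>R e))"
    using lborel_integrable_translate[OF assms] by simp
qed

lemma integral_directional_derivative_eq_0:
  fixes g g' :: "'a::euclidean_space \<Rightarrow> real"
  assumes der: "\<And>y s. ((\<lambda>s. g (y + s *\<^sub>R e)) has_real_derivative g' (y + s *\<^sub>R e)) (at s)"
    and g: "integrable lborel g" and g': "integrable lborel g'"
  shows "(\<integral>y. g' y \<partial>lborel) = 0"
proof -
  let ?F = "\<lambda>(s::real, y). indicator {0..1} s * g' (y + s *\<^sub>R e)"
  have F: "integrable (lborel \<Otimes>\<^sub>M lborel) ?F"
    by (rule integrable_pair_translate_strip[OF g'])
  have [measurable]: "g \<in> borel_measurable borel" "g' \<in> borel_measurable borel"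
    using borel_measurable_integrable[OF g] borel_measurable_integrable[OF g'] by simp_all
  have inner: "(\<integral>y. ?F (s, y) \<partial>lborel) = indicator {0..1} s * (\<integral>y. g' y \<partial>lborel)" for s
    using lborel_integral_translate[of g' "s *\<^sub>R e"] by simp
  have "(\<integral>z. ?F z \<partial>(lborel \<Otimes>\<^sub>M lborel)) = (\<integral>s. (\<integral>y. ?F (s, y) \<partial>lborel) \<partial>lborel)"
    by (rule lborel_pair.integral_fst'[OF F, symmetric])
  also have "\<dots> = (\<integral>s. indicator {0..1} (s::real) * (\<integral>y. g' y \<partial>lborel) \<partial>lborel)"
    by (simp only: inner)
  also have "\<dots> = (\<integral>y. g' y \<partial>lborel)"
    by (simp add: measure_lborel_Icc)
  finally have "(\<integral>y. g' y \<partial>lborel) = (\<integral>y. (\<integral>s. indicator {0..1} s * g' (y + s *\<^sub>R e) \<partial>lborel) \<partial>lborel)"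
    using lborel_pair.integral_snd[OF F] by simp
  also have "\<dots> = (\<integral>y. g (y + e) - g y \<partial>lborel)"
  proof (rule integral_cong_AE)
    show "AE y in lborel. (\<integral>s. indicator {0..1} s * g' (y + s *\<^sub>R e) \<partial>lborel) = g (y + e) - g y"
      using lborel_pair.AE_integrable_snd[OF F]
    proof eventually_elim
      case (elim y)
      then have "set_integrable lborel {0..1} (\<lambda>s. g' (y + s *\<^sub>R e))"
        by (simp add: set_integrable_def)
      from set_integral_segment_eq_diff[OF der this] show ?case
        by (simp add: set_lebesgue_integral_def)
    qed
  qed (use borel_measurable_integrable[OF lborel_pair.integrable_snd[OF F]] in simp_all)
  also have "\<dots> = 0"
    using lborel_integral_translate[of g e] lborel_integrable_translate[OF g] g by simp
  finally show ?thesis .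
qed

lemma has_real_derivative_along_line:
  fixes G :: "'a::real_normed_vector \<Rightarrow> 'b::real_inner"
  assumes "G differentiable (at (y + s *\<^sub>R e))"
  shows "((\<lambda>s. G (y + s *\<^sub>R e) \<bullet> v) has_real_derivative
           frechet_derivative G (at (y + s *\<^sub>R e)) e \<bullet> v) (at s)"
proof -
  define G' where "G' = frechet_derivative G (at (y + s *\<^sub>R e))"
  have G': "(G has_derivative G') (at (y + s *\<^sub>R e))"
    unfolding G'_def using assms frechet_derivative_works by blast
  have "((\<lambda>s. y + s *\<^sub>R e) has_derivative (\<lambda>h. h *\<^sub>R e)) (at s)"
    by (auto intro!: derivative_eq_intros)
  from bounded_linear.has_derivative[OF bounded_linear_inner_left diff_chain_at[OF this G']]
  have "((\<lambda>s. G (y + s *\<^sub>R e) \<bullet> v) has_derivative (\<lambda>h. G' (h *\<^sub>R e) \<bullet> v)) (at s)"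
    by (simp add: o_def)
  moreover have "(\<lambda>h. G' (h *\<^sub>R e) \<bullet> v) = (\<lambda>h. (G' e \<bullet> v) * h)"
    using linear_scale[OF has_derivative_linear[OF G']] by (simp add: mult.commute)
  ultimately show ?thesis
    unfolding has_field_derivative_def G'_def by simp
qed

lemma integral_divg_eq_0:
  fixes G :: "'a::euclidean_space \<Rightarrow> 'a"
  assumes diff: "\<And>y. G differentiable (at y)" and G: "integrable lborel G"
    and partials: "\<And>i. i \<in> Basis \<Longrightarrow> integrable lborel (\<lambda>y. frechet_derivative G (at y) i \<bullet> i)"
  shows "(\<integral>y. divg G y \<partial>lborel) = 0"
proof -
  have "(\<integral>y. divg G y \<partial>lborel) = (\<Sum>i\<in>Basis. \<integral>y. frechet_derivative G (at y) i \<bullet> i \<partial>lborel)"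
    unfolding divg_def using partials by (simp add: Bochner_Integration.integral_sum)
  also have "\<dots> = 0"
  proof (intro sum.neutral ballI)
    fix i :: 'a assume "i \<in> Basis"
    show "(\<integral>y. frechet_derivative G (at y) i \<bullet> i \<partial>lborel) = 0"
      using has_real_derivative_along_line[OF diff] G partials[OF \<open>i \<in> Basis\<close>]
      by (intro integral_directional_derivative_eq_0[where g = "\<lambda>y. G y \<bullet> i" and e = i]) auto
  qed
  finally show ?thesis .
qed

lemma has_real_derivative_perspective:
  fixes p q :: "real \<Rightarrow> real"
  assumes p: "(p has_real_derivative dp) (at t)" and q: "(q has_real_derivative dq) (at t)"
    and "q t \<noteq> 0" and Phi: "(Phi has_real_derivative D) (at (p t / q t))"
  shows "((\<lambda>s. Phi (p s / q s) * q s) has_real_derivative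
           D * dp + (Phi (p t / q t) - p t / q t * D) * dq) (at t)"
proof -
  have "((\<lambda>s. Phi (p s / q s) * q s) has_real_derivative
           D * ((dp * q t - p t * dq) / (q t * q t)) * q t + dq * Phi (p t / q t)) (at t)"
    using DERIV_mult[OF DERIV_chain2[OF Phi DERIV_divide[OF p q \<open>q t \<noteq> 0\<close>]] q] .
  moreover have "D * ((dp * q t - p t * dq) / (q t * q t)) * q t + dq * Phi (p t / q t)
      = D * dp + (Phi (p t / q t) - p t / q t * D) * dq"
    using \<open>q t \<noteq> 0\<close> by (simp add: field_simps)
  ultimately show ?thesis by simp
qed

lemma has_real_derivative_perspective_coefficient:
  assumes "(Phi has_real_derivative Phi' u) (at u)" and "(Phi' has_real_derivative D2) (at u)"
  shows "((\<lambda>v. Phi v - v * Phi' v) has_real_derivative - (u * D2)) (at u)"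
  using DERIV_diff[OF assms(1) DERIV_mult[OF DERIV_ident assms(2)]] by (simp add: mult.commute)

lemma divg_perspective_field:
  fixes r :: "'a::euclidean_space \<Rightarrow> real" and JP JQ :: "'a \<Rightarrow> 'a"
  assumes r: "r differentiable (at y)"
    and JP: "JP differentiable (at y)" and JQ: "JQ differentiable (at y)"
    and Phi: "(Phi has_real_derivative Phi' (r y)) (at (r y))"
    and Phi': "(Phi' has_real_derivative D2) (at (r y))"
  shows "divg (\<lambda>z. Phi' (r z) *\<^sub>R JP z + (Phi (r z) - r z * Phi' (r z)) *\<^sub>R JQ z) y
       = Phi' (r y) * divg JP y + (Phi (r y) - r y * Phi' (r y)) * divg JQ y
         + D2 * (grad r y \<bullet> (JP y - r y *\<^sub>R JQ y))"
proof -
  note dPhi_r = grad_compose[OF Phi' r]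
  note coeff_r = grad_compose[OF has_real_derivative_perspective_coefficient[OF Phi Phi'] r]
  have "divg (\<lambda>z. Phi' (r z) *\<^sub>R JP z + (Phi (r z) - r z * Phi' (r z)) *\<^sub>R JQ z) y
      = Phi' (r y) * divg JP y + (D2 *\<^sub>R grad r y) \<bullet> JP y
        + ((Phi (r y) - r y * Phi' (r y)) * divg JQ y + (- (r y * D2) *\<^sub>R grad r y) \<bullet> JQ y)"
    using divg_add[OF differentiable_scaleR[OF dPhi_r(1) JP] differentiable_scaleR[OF coeff_r(1) JQ]]
      divg_scaleR[OF dPhi_r(1) JP] divg_scaleR[OF coeff_r(1) JQ] dPhi_r(2) coeff_r(2) by simp
  then show ?thesis
    by (simp add: inner_diff_right algebra_simps)
qed

lemma langevin_flux_diff_eq_grad_ratio: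
  fixes P Q :: "'a::euclidean_space \<Rightarrow> real"
  assumes "P differentiable (at y)" "Q differentiable (at y)" "Q y \<noteq> 0"
  shows "langevin_flux f P y - (P y / Q y) *\<^sub>R langevin_flux f Q y = Q y *\<^sub>R grad (\<lambda>z. P z / Q z) y"
  using assms by (simp add: langevin_flux_def grad_divide scaleR_add_right scaleR_diff_right)

definition perspective_flux ::
    "(real \<Rightarrow> real) \<Rightarrow> ('a::euclidean_space \<Rightarrow> real) \<Rightarrow> ('a \<Rightarrow> real) \<Rightarrow> ('a \<Rightarrow> real) \<Rightarrow> 'a \<Rightarrow> 'a" where
  "perspective_flux Phi f P Q =
     (\<lambda>z. deriv Phi (P z / Q z) *\<^sub>R langevin_flux f P z
          + (Phi (P z / Q z) - P z / Q z * deriv Phi (P z / Q z)) *\<^sub>R langevin_flux f Q z)"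

lemma divg_perspective_flux:
  fixes P Q :: "'a::euclidean_space \<Rightarrow> real"
  assumes P: "P differentiable (at y)" and Q: "Q differentiable (at y)" and "Q y \<noteq> 0"
    and JP: "langevin_flux f P differentiable (at y)" and JQ: "langevin_flux f Q differentiable (at y)"
    and Phi: "Phi differentiable (at (P y / Q y))" and Phi': "deriv Phi differentiable (at (P y / Q y))"
  shows "divg (perspective_flux Phi f P Q) y
     = deriv Phi (P y / Q y) * divg (langevin_flux f P) y
       + (Phi (P y / Q y) - P y / Q y * deriv Phi (P y / Q y)) * divg (langevin_flux f Q) y
       + (norm (grad (\<lambda>z. P z / Q z) y))\<^sup>2 * deriv (deriv Phi) (P y / Q y) * Q y"
proof -
  have r: "(\<lambda>z. P z / Q z) differentiable (at y)"
    using P Q \<open>Q y \<noteq> 0\<close> by simp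
  have "grad (\<lambda>z. P z / Q z) y \<bullet> (langevin_flux f P y - (P y / Q y) *\<^sub>R langevin_flux f Q y)
      = Q y * (norm (grad (\<lambda>z. P z / Q z) y))\<^sup>2"
    using langevin_flux_diff_eq_grad_ratio[OF P Q \<open>Q y \<noteq> 0\<close>] by (simp add: power2_norm_eq_inner)
  moreover have "divg (perspective_flux Phi f P Q) y
     = deriv Phi (P y / Q y) * divg (langevin_flux f P) y
       + (Phi (P y / Q y) - P y / Q y * deriv Phi (P y / Q y)) * divg (langevin_flux f Q) y
       + deriv (deriv Phi) (P y / Q y)
         * (grad (\<lambda>z. P z / Q z) y \<bullet> (langevin_flux f P y - (P y / Q y) *\<^sub>R langevin_flux f Q y))"
    unfolding perspective_flux_def
    by (rule divg_perspective_field[OF r JP JQ])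
      (use Phi Phi' in \<open>simp_all add: DERIV_deriv_iff_real_differentiable\<close>)
  ultimately show ?thesis
    by (simp add: ac_simps)
qed

lemma deriv_perspective_langevin:
  assumes u: "langevin_FP f u" and v: "langevin_FP f v" and "t > 0" and "v t y \<noteq> 0"
    and Phi: "Phi differentiable (at (u t y / v t y))" and Phi': "deriv Phi differentiable (at (u t y / v t y))"
  shows "deriv (\<lambda>s. Phi (u s y / v s y) * v s y) t
     = divg (perspective_flux Phi f (u t) (v t)) y
       - (norm (grad (\<lambda>z. u t z / v t z) y))\<^sup>2 * deriv (deriv Phi) (u t y / v t y) * v t y"
proof -
  have FP: "u t differentiable (at y)" "langevin_flux f (u t) differentiable (at y)"
    "((\<lambda>s. u s y) has_real_derivative divg (langevin_flux f (u t)) y) (at t)"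
    "v t differentiable (at y)" "langevin_flux f (v t) differentiable (at y)"
    "((\<lambda>s. v s y) has_real_derivative divg (langevin_flux f (v t)) y) (at t)"
    using u v \<open>t > 0\<close> unfolding langevin_FP_def by blast+
  have "deriv (\<lambda>s. Phi (u s y / v s y) * v s y) t
      = deriv Phi (u t y / v t y) * divg (langevin_flux f (u t)) y
        + (Phi (u t y / v t y) - u t y / v t y * deriv Phi (u t y / v t y)) * divg (langevin_flux f (v t)) y"
    using Phi by (intro DERIV_imp_deriv has_real_derivative_perspective FP \<open>v t y \<noteq> 0\<close>)
      (simp add: DERIV_deriv_iff_real_differentiable)
  then show ?thesis
    using divg_perspective_flux[OF FP(1,4) \<open>v t y \<noteq> 0\<close> FP(2,5) Phi Phi'] by simp
qed

lemma integral_deriv_perspective_langevin: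
  assumes u: "langevin_FP f u" and v: "langevin_FP f v" and "t > 0"
    and u_pos: "\<And>y. 0 < u t y" and v_pos: "\<And>y. 0 < v t y"
    and Phi: "\<And>r. 0 < r \<Longrightarrow> Phi differentiable (at r) \<and> deriv Phi differentiable (at r)"
    and int: "integrable lborel (\<lambda>y. deriv (\<lambda>s. Phi (u s y / v s y) * v s y) t)"
    and G_diff: "\<And>y. perspective_flux Phi f (u t) (v t) differentiable (at y)"
    and G_int: "integrable lborel (perspective_flux Phi f (u t) (v t))"
    and G_partials: "\<And>i. i \<in> Basis \<Longrightarrow>
          integrable lborel (\<lambda>y. frechet_derivative (perspective_flux Phi f (u t) (v t)) (at y) i \<bullet> i)"
  shows "(\<integral>y. deriv (\<lambda>s. Phi (u s y / v s y) * v s y) t \<partial>lborel) = - phi_fisher Phi (u t) (v t)"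
proof -
  let ?G = "perspective_flux Phi f (u t) (v t)"
  let ?I = "\<lambda>y. (norm (grad (\<lambda>z. u t z / v t z) y))\<^sup>2 * deriv (deriv Phi) (u t y / v t y) * v t y"
  have pointwise: "deriv (\<lambda>s. Phi (u s y / v s y) * v s y) t = divg ?G y - ?I y" for y
    using u_pos[of y] v_pos[of y] Phi[of "u t y / v t y"]
    by (intro deriv_perspective_langevin[OF u v \<open>t > 0\<close>]) auto
  have div_int: "integrable lborel (divg ?G)"
    unfolding divg_def using G_partials by auto
  have "integrable lborel ?I"
    using Bochner_Integration.integrable_diff[OF div_int int] pointwise by simp
  then have "(\<integral>y. deriv (\<lambda>s. Phi (u s y / v s y) * v s y) t \<partial>lborel)
      = (\<integral>y. divg ?G y \<partial>lborel) - (\<integral>y. ?I y \<partial>lborel)"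
    using div_int pointwise by simp
  also have "(\<integral>y. divg ?G y \<partial>lborel) = 0"
    by (rule integral_divg_eq_0[OF G_diff G_int G_partials])
  finally show ?thesis
    unfolding phi_fisher_def by simp
qed

lemma marginal_pos:
  assumes "prob_space M" and pos: "\<And>x. 0 < kappa x y" and int: "integrable M (\<lambda>x. kappa x y)"
  shows "0 < marginal M kappa y"
proof -
  interpret prob_space M by fact
  have nonneg: "AE x in M. 0 \<le> kappa x y"
    using pos by (simp add: less_imp_le)
  have "marginal M kappa y \<noteq> 0"
  proof
    assume "marginal M kappa y = 0"
    then have "AE x in M. kappa x y = 0"
      using integral_nonneg_eq_0_iff_AE[OF int nonneg] by (simp add: marginal_def)
    then have "AE x in M. False"
      by eventually_elim (use pos in \<open>simp add: less_le\<close>)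
    then show False by simp
  qed
  moreover have "0 \<le> marginal M kappa y"
    unfolding marginal_def using nonneg by (rule integral_nonneg_AE)
  ultimately show ?thesis by simp
qed

theorem mainTheorem2:
  fixes f :: "'a::euclidean_space \<Rightarrow> real"
    and Phi :: "real \<Rightarrow> real"
    and rho0 :: "'a measure"
    and p :: "real \<Rightarrow> 'a \<Rightarrow> 'a \<Rightarrow> real"
    and t :: real
  assumes Phi_C2: "\<exists>Phi1 Phi2. \<forall>r\<ge>0. (Phi has_real_derivative Phi1 r) (at r within {0..})
                      \<and> (Phi1 has_real_derivative Phi2 r) (at r within {0..})"
    and Phi_C2_int: "\<forall>r>0. Phi differentiable (at r) \<and> deriv Phi differentiable (at r)"
    and Phi_convex: "strictly_convex_on {0..} Phi"
    and Phi_one: "Phi 1 = 0"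
    \<comment> \<open>potential f, target nu \<propto> exp(-f)\<close>
    and f_diff: "\<forall>y. f differentiable (at y)"
    and gradf_diff: "\<forall>y. grad f differentiable (at y)"
    and nu_normalizable: "integrable lborel (\<lambda>y. exp (- f y))"
    \<comment> \<open>law of X_0\<close>
    and rho0_prob: "prob_space rho0"
    and rho0_sets: "sets rho0 = sets borel"
    \<comment> \<open>p s x = Lebesgue density of X_s given X_0 = x (transition density of the Langevin dynamics)\<close>
    and p_meas: "\<forall>s>0. (\<lambda>(x, y). p s x y) \<in> borel_measurable borel"
    and p_pos: "\<forall>s>0. \<forall>x y. 0 < p s x y"
    and p_density: "\<forall>s>0. \<forall>x. integrable lborel (p s x) \<and> (\<integral>y. p s x y \<partial>lborel) = 1"
    and p_FP: "\<forall>x. langevin_FP f (\<lambda>s. p s x)"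
    and p_init: "\<forall>x. \<forall>g::'a \<Rightarrow> real. bounded (range g) \<and> continuous_on UNIV g \<longrightarrow>
                   ((\<lambda>s. \<integral>y. g y * p s x y \<partial>lborel) \<longlongrightarrow> g x) (at_right 0)"
    \<comment> \<open>regularity: the marginal rho_s = marginal rho0 (p s) is well defined and solves Fokker--Planck\<close>
    and p_int_x: "\<forall>s>0. \<forall>y. integrable rho0 (\<lambda>x. p s x y)"
    and marg_FP: "langevin_FP f (\<lambda>s. marginal rho0 (p s))"
    and t_pos: "t > 0"
    \<comment> \<open>regularity: differentiation under the integral signs is allowed at time t\<close>
    and reg_int: "\<forall>x. integrable lborel
          (\<lambda>y. deriv (\<lambda>s. Phi (p s x y / marginal rho0 (p s) y) * marginal rho0 (p s) y) t)"
    and reg_inner: "\<forall>x. ((\<lambda>s. phi_div Phi (p s x) (marginal rho0 (p s))) has_real_derivative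
          (\<integral>y. deriv (\<lambda>s. Phi (p s x y / marginal rho0 (p s) y) * marginal rho0 (p s) y) t \<partial>lborel)) (at t)"
    and reg_outer: "((\<lambda>s. phi_MI Phi rho0 (p s)) has_real_derivative
          (\<integral>x. deriv (\<lambda>s. phi_div Phi (p s x) (marginal rho0 (p s))) t \<partial>rho0)) (at t)"
    \<comment> \<open>regularity: boundary terms in the integration by parts vanish (the field G is C^1-type
        with G and all its partial derivatives integrable)\<close>
    and reg_ibp: "\<forall>x. let q = marginal rho0 (p t); r = (\<lambda>y. p t x y / q y);
                        G = (\<lambda>y. deriv Phi (r y) *\<^sub>R langevin_flux f (p t x) y
                               + (Phi (r y) - r y * deriv Phi (r y)) *\<^sub>R langevin_flux f q y)
                    in (\<forall>y. G differentiable (at y)) \<and> integrable lborel G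
                       \<and> (\<forall>i\<in>Basis. integrable lborel (\<lambda>y. frechet_derivative G (at y) i \<bullet> i))"
  shows "((\<lambda>s. phi_MI Phi rho0 (p s)) has_real_derivative - phi_MFI Phi rho0 (p t)) (at t)"
proof -
  let ?q = "\<lambda>s. marginal rho0 (p s)"
  have q_pos: "0 < ?q t y" for y
    using p_pos p_int_x t_pos by (intro marginal_pos[OF rho0_prob]) auto
  have inner: "deriv (\<lambda>s. phi_div Phi (p s x) (?q s)) t = - phi_fisher Phi (p t x) (?q t)" for x
  proof -
    have "(\<integral>y. deriv (\<lambda>s. Phi (p s x y / ?q s y) * ?q s y) t \<partial>lborel) = - phi_fisher Phi (p t x) (?q t)"
      using reg_ibp p_pos t_pos q_pos Phi_C2_int reg_int
      by (intro integral_deriv_perspective_langevin[OF p_FP[rule_format] marg_FP t_pos])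
        (auto simp: Let_def perspective_flux_def)
    then show ?thesis
      using DERIV_imp_deriv[OF reg_inner[rule_format]] by simp
  qed
  have "(\<integral>x. deriv (\<lambda>s. phi_div Phi (p s x) (?q s)) t \<partial>rho0) = - phi_MFI Phi rho0 (p t)"
    unfolding phi_MFI_def inner by simp
  then show ?thesis
    using reg_outer by simp
qed

end
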